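(* Let $\mathcal V$ be a finite alphabet, $\mathcal V^*$ the set of finite strings over $\mathcal V$, $e$ an environment, $p$ a probability distribution on test suites $t\in\mathcal V^*$, and $c_1,c_2\in\mathcal V^*$ fixed implementations. Let $$\mathrm{sim}_{p,e}(c_1,c_2):=\mathbb E_{t\sim p}\Big[\tfrac{1}{|t|}\sum_{k=1}^{|t|}\mathbf 1\{O_k(c_1,t\mid e)=O_k(c_2,t\mid e)\}\Big]$$ and suppose $\mathrm{sim}_{p,e}(c_1,c_2)=\mu\in(0,1)$. For $m\ge1$, draw $t_1,\dots,t_m\sim p$ i.i.d. and define the smooth estimator $$\widehat{\mathrm{sim}}_{p,e;m}(c_1,c_2):=\frac1m\sum_{j=1}^m\frac{1}{|t_j|}\sum_{k=1}^{|t_j|}\mathbf 1\{O_k(c_1,t_j\mid e)=O_k(c_2,t_j\mid e)\}$$ and the sharp estimator $\widehat{\mathrm{sim}}^\infty_{p,e;m}(c_1,c_2):=\lim_{s\to\infty}\big(\widehat{\mathrm{sim}}_{p,e;m}(c_1,c_2)\big)^s=\mathbf 1\{\widehat{\mathrm{sim}}_{p,e;m}(c_1,c_2)=1\}$. For an estimator $\widehat X$ let $\mathrm{SNR}(\widehat X):=(\mathbb E[\widehat X])^2/\mathrm{Var}(\widehat X)$. Then for every $m\ge1$, $$\frac{\mathrm{SNR}(\widehat{\mathrm{sim}}_{p,e;m})}{\mathrm{SNR}(\widehat{\mathrm{sim}}^\infty_{p,e;m})}\ \ge\ m\Big(\frac1\mu\Big)^{m-1}\cdot\frac{1-\mu^m}{1-\mu}\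 \ge\ m^2.$$
   Context: A test suite $t\in\mathcal V^*$ consists of $|t|\ge1$ test cases. For an environment $e$, an implementation $c$ and a test suite $t$, the test harness returns a deterministic output vector $O(c,t\mid e)=(O_1(c,t\mid e),\dots,O_{|t|}(c,t\mid e))\in\mathbb O^{|t|}$ for a set $\mathbb O$ of possible test outputs. *)

theory Defs
  imports "HOL-Probability.Probability"
begin

text \<open>A test harness is modelled as a function H :: env => impl => suite => output list;
  O_k(c,t|e) is (H e c t) ! (k-1), i.e. 0-based index k-1.  Test suites and implementations
  are strings over the alphabet 'v, i.e. 'v list; |t| is the length of t.\<close>

definition agree_frac ::
  "('e \<Rightarrow> 'v list \<Rightarrow> 'v list \<Rightarrow> 'o list) \<Rightarrow> 'e \<Rightarrow> 'v list \<Rightarrow> 'v list \<Rightarrow> 'v list \<Rightarrow> real" where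
  "agree_frac H e c1 c2 t =
     (1 / real (length t)) * (\<Sum>k<length t. if H e c1 t ! k = H e c2 t ! k then 1 else 0)"

definition sim ::
  "'v list pmf \<Rightarrow> ('e \<Rightarrow> 'v list \<Rightarrow> 'v list \<Rightarrow> 'o list) \<Rightarrow> 'e \<Rightarrow> 'v list \<Rightarrow> 'v list \<Rightarrow> real" where
  "sim p H e c1 c2 = measure_pmf.expectation p (agree_frac H e c1 c2)"

definition iid_suites :: "'v list pmf \<Rightarrow> nat \<Rightarrow> (nat \<Rightarrow> 'v list) pmf" where
  "iid_suites p m = Pi_pmf {..<m} [] (\<lambda>_. p)"

definition sim_hat ::
  "nat \<Rightarrow> ('e \<Rightarrow> 'v list \<Rightarrow> 'v list \<Rightarrow> 'o list) \<Rightarrow> 'e \<Rightarrow> 'v list \<Rightarrow> 'v list \<Rightarrow> (nat \<Rightarrow> 'v list) \<Rightarrow> real" where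
  "sim_hat m H e c1 c2 ts = (1 / real m) * (\<Sum>j<m. agree_frac H e c1 c2 (ts j))"

definition sim_hat_inf ::
  "nat \<Rightarrow> ('e \<Rightarrow> 'v list \<Rightarrow> 'v list \<Rightarrow> 'o list) \<Rightarrow> 'e \<Rightarrow> 'v list \<Rightarrow> 'v list \<Rightarrow> (nat \<Rightarrow> 'v list) \<Rightarrow> real" where
  "sim_hat_inf m H e c1 c2 ts = lim (\<lambda>s. (sim_hat m H e c1 c2 ts) ^ s)"

text \<open>Signal-to-noise ratio (E X)^2 / Var X, valued in the extended reals
  (positive/0 = \<infinity>, 0/0 = 0).\<close>
definition SNR :: "'a pmf \<Rightarrow> ('a \<Rightarrow> real) \<Rightarrow> ereal" where
  "SNR M X = ereal ((measure_pmf.expectation M X)\<^sup>2) / ereal (measure_pmf.variance M X)"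

end

theory Submission
  imports Defs
begin

(* Both estimators are functions of m i.i.d. copies of the score a(t) = agree_frac t, which
   lies in [0, 1] and has mean \<mu>.  The smooth estimator is their mean: it has mean \<mu> and, by
   independence, variance Var a / m \<le> (\<mu> - \<mu>^2) / m because a^2 \<le> a, so its SNR is at
   least m \<mu> / (1 - \<mu>).  The sharp estimator is the indicator that all m scores equal 1, a
   Bernoulli variable with parameter q^m where q = P(a = 1) \<le> \<mu>; its SNR q^m / (1 - q^m) is
   increasing in q^m, hence at most \<mu>^m / (1 - \<mu>^m).  Dividing gives the first bound; the
   second holds because (1 - \<mu>^m) / (1 - \<mu>) = \<mu>^0 + ... + \<mu>^(m-1) \<ge> m \<mu>^(m-1). *)

(* b = 0 is allowed: then a / b is \<infinity> unless a = 0, which forces x = 0. *)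
lemma ereal_divide_mono:
  fixes a b :: ereal
  assumes "ereal x \<le> a" "0 \<le> b" "b \<le> ereal y" "0 \<le> x" "0 < y"
  shows "ereal (x / y) \<le> a / b"
  using assms by (cases a; cases b) (auto simp: frac_le)

lemma lim_power_unit_interval:
  fixes x :: real
  assumes "0 \<le> x" "x \<le> 1"
  shows "lim (\<lambda>s. x ^ s) = of_bool (x = 1)"
proof (cases "x = 1")
  case True
  then show ?thesis by (simp add: limI)
next
  case False
  then have "(\<lambda>s. x ^ s) \<longlonglongrightarrow> 0"
    using assms by (intro LIMSEQ_power_zero) auto
  with False show ?thesis by (simp add: limI)
qed

lemma mean_eq_1_iff:
  fixes x :: "nat \<Rightarrow> real"
  assumes "m \<noteq> 0" "\<And>j. j < m \<Longrightarrow> x j \<le> 1"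
  shows "1 / real m * (\<Sum>j<m. x j) = 1 \<longleftrightarrow> (\<forall>j<m. x j = 1)"
proof -
  have "1 / real m * (\<Sum>j<m. x j) = 1 \<longleftrightarrow> (\<Sum>j<m. 1 - x j) = 0"
    using assms(1) by (auto simp: sum_subtractf field_simps)
  also have "\<dots> \<longleftrightarrow> (\<forall>j<m. x j = 1)"
    using assms(2) by (subst sum_nonneg_eq_0_iff) auto
  finally show ?thesis .
qed

lemma divide_eq_geometric_ratio:
  fixes \<mu> :: real
  assumes "0 < \<mu>" "\<mu> < 1" "m \<noteq> 0"
  shows "(real m * \<mu> / (1 - \<mu>)) / (\<mu> ^ m / (1 - \<mu> ^ m))
           = real m * (1 / \<mu>) ^ (m - 1) * ((1 - \<mu> ^ m) / (1 - \<mu>))"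
proof -
  have "\<mu> ^ m = \<mu> * \<mu> ^ (m - 1)"
    using assms(3) by (simp add: power_eq_if)
  moreover have "\<mu> ^ m < 1"
    using assms by (simp add: power_less_one_iff)
  ultimately show ?thesis
    using assms by (simp add: field_simps)
qed

lemma square_le_geometric_ratio:
  fixes \<mu> :: real
  assumes "0 < \<mu>" "\<mu> < 1"
  shows "(real m)\<^sup>2 \<le> real m * (1 / \<mu>) ^ (m - 1) * ((1 - \<mu> ^ m) / (1 - \<mu>))"
proof -
  have "real m * \<mu> ^ (m - 1) = (\<Sum>k<m. \<mu> ^ (m - 1))"
    by simp
  also have "\<dots> \<le> (\<Sum>k<m. \<mu> ^ k)"
    using assms by (intro sum_mono power_decreasing) auto
  also have "\<dots> = (1 - \<mu> ^ m) / (1 - \<mu>)"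
    using assms by (simp add: sum_gp_strict)
  finally have "real m * \<mu> ^ (m - 1) \<le> (1 - \<mu> ^ m) / (1 - \<mu>)" .
  then have "real m * (1 / \<mu>) ^ (m - 1) * (real m * \<mu> ^ (m - 1))
      \<le> real m * (1 / \<mu>) ^ (m - 1) * ((1 - \<mu> ^ m) / (1 - \<mu>))"
    using assms by (intro mult_left_mono) auto
  moreover have "(1 / \<mu>) ^ (m - 1) * \<mu> ^ (m - 1) = 1"
    using assms by (simp add: power_one_over)
  ultimately show ?thesis
    by (simp add: power2_eq_square algebra_simps)
qed

lemma integrable_measure_pmf_bounded:
  fixes f :: "'a \<Rightarrow> real"
  assumes "\<And>x. \<bar>f x\<bar> \<le> B"
  shows "integrable (measure_pmf M) f"
  by (rule measure_pmf.integrable_const_bound[where B=B]) (auto simp: assms)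

lemma
  fixes p :: "'i \<Rightarrow> 'a pmf" and g :: "'a \<Rightarrow> real"
  assumes "finite A" "i \<in> A"
  shows integrable_Pi_pmf_component_iff:
      "integrable (Pi_pmf A d p) (\<lambda>ts. g (ts i)) \<longleftrightarrow> integrable (p i) g"
    and expectation_Pi_pmf_component:
      "measure_pmf.expectation (Pi_pmf A d p) (\<lambda>ts. g (ts i)) = measure_pmf.expectation (p i) g"
proof -
  have "p i = map_pmf (\<lambda>ts. ts i) (Pi_pmf A d p)"
    using assms by (simp add: Pi_pmf_component)
  then show "integrable (Pi_pmf A d p) (\<lambda>ts. g (ts i)) \<longleftrightarrow> integrable (p i) g"
    and "measure_pmf.expectation (Pi_pmf A d p) (\<lambda>ts. g (ts i)) = measure_pmf.expectation (p i) g"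
    by simp_all
qed

lemma
  fixes p :: "'i \<Rightarrow> 'a pmf" and g h :: "'a \<Rightarrow> real"
  assumes A: "finite A" "i \<in> A" "j \<in> A" "i \<noteq> j"
    and int: "integrable (p i) g" "integrable (p j) h"
  shows integrable_Pi_pmf_mult_components:
      "integrable (Pi_pmf A d p) (\<lambda>ts. g (ts i) * h (ts j))"
    and expectation_Pi_pmf_mult_components:
      "measure_pmf.expectation (Pi_pmf A d p) (\<lambda>ts. g (ts i) * h (ts j))
         = measure_pmf.expectation (p i) g * measure_pmf.expectation (p j) h"
proof -
  note P = measure_pmf.prob_space_axioms[of "Pi_pmf A d p"]
  define X where "X = (\<lambda>k ts. (if k = i then g else h) (ts k))"
  have "prob_space.indep_vars (measure_pmf (Pi_pmf A d p)) (\<lambda>_. borel) X A"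
    unfolding X_def by (rule prob_space.indep_vars_compose2[OF P indep_vars_Pi_pmf[OF A(1)]]) auto
  then have indep: "prob_space.indep_vars (measure_pmf (Pi_pmf A d p)) (\<lambda>_. borel) X {i, j}"
    by (rule prob_space.indep_vars_subset[OF P]) (use A in auto)
  have int_X: "integrable (Pi_pmf A d p) (X k)" if "k \<in> {i, j}" for k
    using that A int by (auto simp: X_def integrable_Pi_pmf_component_iff)
  have prod_X: "(\<Prod>k\<in>{i, j}. X k ts) = g (ts i) * h (ts j)" for ts
    using A by (simp add: X_def)
  show "integrable (Pi_pmf A d p) (\<lambda>ts. g (ts i) * h (ts j))"
    using prob_space.indep_vars_integrable[OF P _ indep int_X] by (simp add: prod_X)
  have "measure_pmf.expectation (Pi_pmf A d p) (\<lambda>ts. \<Prod>k\<in>{i, j}. X k ts)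
          = (\<Prod>k\<in>{i, j}. measure_pmf.expectation (Pi_pmf A d p) (X k))"
    by (rule prob_space.indep_vars_lebesgue_integral[OF P _ indep int_X]) simp_all
  then show "measure_pmf.expectation (Pi_pmf A d p) (\<lambda>ts. g (ts i) * h (ts j))
         = measure_pmf.expectation (p i) g * measure_pmf.expectation (p j) h"
    using A by (simp add: prod_X X_def expectation_Pi_pmf_component)
qed

lemma variance_sum_Pi_pmf:
  fixes p :: "'i \<Rightarrow> 'a pmf" and g :: "'i \<Rightarrow> 'a \<Rightarrow> real"
  assumes A: "finite A" and sq_int: "\<And>i. i \<in> A \<Longrightarrow> integrable (p i) (\<lambda>x. (g i x)\<^sup>2)"
  shows "measure_pmf.variance (Pi_pmf A d p) (\<lambda>ts. \<Sum>i\<in>A. g i (ts i))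
           = (\<Sum>i\<in>A. measure_pmf.variance (p i) (g i))"
proof -
  let ?P = "Pi_pmf A d p"
  define Y where "Y = (\<lambda>i x. g i x - measure_pmf.expectation (p i) (g i))"
  have int_g: "integrable (p i) (g i)" if "i \<in> A" for i
    using measure_pmf.square_integrable_imp_integrable[OF _ sq_int[OF that]] by simp
  have int_Y: "integrable (p i) (Y i)" if "i \<in> A" for i
    using int_g[OF that] by (simp add: Y_def)
  have mean_Y: "measure_pmf.expectation (p i) (Y i) = 0" if "i \<in> A" for i
    using int_g[OF that] by (simp add: Y_def)
  have sq_int_Y: "integrable (p i) (\<lambda>x. Y i x * Y i x)" if "i \<in> A" for i
    using int_g[OF that] sq_int[OF that] by (simp add: Y_def power2_eq_square algebra_simps)
  have int_YY: "integrable ?P (\<lambda>ts. Y i (ts i) * Y j (ts j))" if "i \<in> A" "j \<in> A" for i j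
  proof (cases "i = j")
    case True
    then show ?thesis
      using sq_int_Y[OF that(1)]
        integrable_Pi_pmf_component_iff[where g="\<lambda>x. Y i x * Y i x", OF A that(1)]
      by simp
  next
    case False
    then show ?thesis
      using that A int_Y by (simp add: integrable_Pi_pmf_mult_components)
  qed
  have E_YY: "measure_pmf.expectation ?P (\<lambda>ts. Y i (ts i) * Y j (ts j))
      = (if i = j then measure_pmf.variance (p i) (g i) else 0)" if "i \<in> A" "j \<in> A" for i j
  proof (cases "i = j")
    case True
    then show ?thesis
      using expectation_Pi_pmf_component[where g="\<lambda>x. Y i x * Y i x", OF A that(1)]
      by (simp add: Y_def power2_eq_square)
  next
    case False
    then show ?thesis
      using that A int_Y mean_Y by (simp add: expectation_Pi_pmf_mult_components)
  qed
  have E_sum: "measure_pmf.expectation ?P (\<lambda>ts. \<Sum>i\<in>A. g i (ts i))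
      = (\<Sum>i\<in>A. measure_pmf.expectation (p i) (g i))"
    using A int_g
    by (subst Bochner_Integration.integral_sum)
       (simp_all add: integrable_Pi_pmf_component_iff expectation_Pi_pmf_component)
  have centered: "(\<Sum>i\<in>A. g i (ts i)) - (\<Sum>i\<in>A. measure_pmf.expectation (p i) (g i))
      = (\<Sum>i\<in>A. Y i (ts i))" for ts
    by (simp add: Y_def sum_subtractf)
  have "measure_pmf.variance ?P (\<lambda>ts. \<Sum>i\<in>A. g i (ts i))
      = measure_pmf.expectation ?P (\<lambda>ts. \<Sum>i\<in>A. \<Sum>j\<in>A. Y i (ts i) * Y j (ts j))"
    by (simp only: E_sum centered power2_eq_square sum_product)
  also have "\<dots> = (\<Sum>i\<in>A. \<Sum>j\<in>A. measure_pmf.expectation ?P (\<lambda>ts. Y i (ts i) * Y j (ts j)))"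
    using int_YY
    by (simp add: Bochner_Integration.integral_sum)
  also have "\<dots> = (\<Sum>i\<in>A. measure_pmf.variance (p i) (g i))"
    using A by (simp add: E_YY)
  finally show ?thesis .
qed

lemma variance_mean_Pi_pmf_iid:
  fixes p :: "'a pmf" and g :: "'a \<Rightarrow> real"
  assumes "integrable p (\<lambda>x. (g x)\<^sup>2)"
  shows "measure_pmf.variance (Pi_pmf {..<m} d (\<lambda>_. p)) (\<lambda>ts. 1 / real m * (\<Sum>j<m. g (ts j)))
           = measure_pmf.variance p g / real m"
proof -
  have mean_eq: "1 / real m * (\<Sum>j<m. g (ts j)) = (\<Sum>j<m. g (ts j) / real m)" for ts
    by (simp add: sum_divide_distrib)
  have "measure_pmf.variance (Pi_pmf {..<m} d (\<lambda>_. p)) (\<lambda>ts. 1 / real m * (\<Sum>j<m. g (ts j)))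
      = (\<Sum>j<m. measure_pmf.variance p (\<lambda>x. g x / real m))"
    unfolding mean_eq using assms by (intro variance_sum_Pi_pmf) (simp_all add: power_divide)
  also have "\<dots> = real m * (measure_pmf.variance p g / (real m)\<^sup>2)"
    by (simp add: diff_divide_distrib[symmetric] power_divide)
  also have "\<dots> = measure_pmf.variance p g / real m"
    by (simp add: power2_eq_square)
  finally show ?thesis .
qed

lemma expectation_mean_Pi_pmf_iid:
  fixes p :: "'a pmf" and g :: "'a \<Rightarrow> real"
  assumes "integrable p g" "m \<noteq> 0"
  shows "measure_pmf.expectation (Pi_pmf {..<m} d (\<lambda>_. p)) (\<lambda>ts. 1 / real m * (\<Sum>j<m. g (ts j)))
           = measure_pmf.expectation p g"
  using assms
  by (simp add: Bochner_Integration.integral_sum integrable_Pi_pmf_component_iff expectation_Pi_pmf_component)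

lemma variance_le_of_unit_interval:
  fixes X :: "'a \<Rightarrow> real"
  assumes "\<And>x. 0 \<le> X x" "\<And>x. X x \<le> 1"
  shows "measure_pmf.variance M X \<le> measure_pmf.expectation M X - (measure_pmf.expectation M X)\<^sup>2"
proof -
  have int: "integrable M X" "integrable M (\<lambda>x. (X x)\<^sup>2)"
    using assms by (auto intro!: integrable_measure_pmf_bounded[where B=1] simp: abs_le_iff power_le_one)
  have "measure_pmf.expectation M (\<lambda>x. (X x)\<^sup>2) \<le> measure_pmf.expectation M X"
    using assms by (intro integral_mono int) (simp add: power2_eq_square mult_left_le)
  then show ?thesis
    by (simp add: measure_pmf.variance_eq int)
qed

lemma SNR_nonneg: "0 \<le> SNR M X"
  by (simp add: SNR_def measure_pmf.variance_positive)

lemma SNR_ge_of_variance_le: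
  assumes "measure_pmf.variance M X \<le> s" "0 < s"
  shows "ereal ((measure_pmf.expectation M X)\<^sup>2 / s) \<le> SNR M X"
proof (cases "measure_pmf.variance M X = 0")
  case True
  then show ?thesis
    by (cases "measure_pmf.expectation M X = 0") (simp_all add: SNR_def)
next
  case False
  then have "0 < measure_pmf.variance M X"
    using measure_pmf.variance_positive order_le_neq_trans by metis
  then show ?thesis
    using assms by (simp add: SNR_def divide_left_mono)
qed

lemma SNR_of_bool_le:
  assumes "measure_pmf.prob M {x. P x} \<le> r" "r < 1"
  shows "SNR M (\<lambda>x. of_bool (P x)) \<le> ereal (r / (1 - r))"
proof -
  define q where "q = measure_pmf.prob M {x. P x}"
  have E: "measure_pmf.expectation M (\<lambda>x. of_bool (P x)) = q"
  proof -
    have "measure_pmf.expectation M (indicator {x. P x}) = q"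
      by (simp add: q_def measure_pmf.emeasure_eq_measure)
    then show ?thesis
      unfolding indicator_def mem_Collect_eq .
  qed
  have V: "measure_pmf.variance M (\<lambda>x. of_bool (P x)) = q - q\<^sup>2"
  proof -
    have "(of_bool (P x) :: real)\<^sup>2 = of_bool (P x)" for x
      by simp
    then show ?thesis
      by (subst measure_pmf.variance_eq) (auto simp: E intro!: integrable_measure_pmf_bounded[where B=1])
  qed
  have SNR_eq: "SNR M (\<lambda>x. of_bool (P x)) = ereal (q\<^sup>2) / ereal (q - q\<^sup>2)"
    unfolding SNR_def V unfolding E ..
  have "0 \<le> q" by (simp add: q_def)
  show ?thesis
  proof (cases "q = 0")
    case True
    then show ?thesis using assms by (simp add: SNR_eq q_def)
  next
    case False
    then have "0 < q" "q < 1"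
      using \<open>0 \<le> q\<close> assms unfolding q_def by linarith+
    then have "SNR M (\<lambda>x. of_bool (P x)) = ereal (q / (1 - q))"
      by (simp add: SNR_eq power2_eq_square field_simps)
    also have "\<dots> \<le> ereal (r / (1 - r))"
      using \<open>0 < q\<close> assms by (simp add: q_def frac_le)
    finally show ?thesis .
  qed
qed

lemma SNR_mean_iid_ge:
  fixes p :: "'a pmf" and g :: "'a \<Rightarrow> real"
  assumes g: "\<And>x. 0 \<le> g x" "\<And>x. g x \<le> 1"
    and mean: "measure_pmf.expectation p g = \<mu>" and \<mu>: "0 < \<mu>" "\<mu> < 1" and m: "m \<noteq> 0"
  shows "ereal (real m * \<mu> / (1 - \<mu>))
           \<le> SNR (Pi_pmf {..<m} d (\<lambda>_. p)) (\<lambda>ts. 1 / real m * (\<Sum>j<m. g (ts j)))"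
proof -
  let ?P = "Pi_pmf {..<m} d (\<lambda>_. p)" and ?X = "\<lambda>ts. 1 / real m * (\<Sum>j<m. g (ts j))"
  have int: "integrable p g" "integrable p (\<lambda>x. (g x)\<^sup>2)"
    using g by (auto intro!: integrable_measure_pmf_bounded[where B=1] simp: abs_le_iff power_le_one)
  have "measure_pmf.variance ?P ?X = measure_pmf.variance p g / real m"
    using int(2) by (rule variance_mean_Pi_pmf_iid)
  also have "\<dots> \<le> (\<mu> - \<mu>\<^sup>2) / real m"
    using variance_le_of_unit_interval[where M=p and X=g, OF g] mean by (simp add: divide_right_mono)
  finally have "ereal ((measure_pmf.expectation ?P ?X)\<^sup>2 / ((\<mu> - \<mu>\<^sup>2) / real m)) \<le> SNR ?P ?X"
    by (rule SNR_ge_of_variance_le) (use \<mu> m in \<open>simp add: power2_eq_square\<close>)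
  moreover have "measure_pmf.expectation ?P ?X = \<mu>"
    using expectation_mean_Pi_pmf_iid[OF int(1) m] mean by simp
  moreover have "\<mu>\<^sup>2 / ((\<mu> - \<mu>\<^sup>2) / real m) = real m * \<mu> / (1 - \<mu>)"
    using \<mu> by (simp add: power2_eq_square field_simps)
  ultimately show ?thesis by simp
qed

lemma SNR_all_eq_1_iid_le:
  fixes p :: "'a pmf" and g :: "'a \<Rightarrow> real"
  assumes g: "\<And>x. 0 \<le> g x" "\<And>x. g x \<le> 1"
    and mean: "measure_pmf.expectation p g = \<mu>" and "\<mu> < 1" and m: "m \<noteq> 0"
  shows "SNR (Pi_pmf {..<m} d (\<lambda>_. p)) (\<lambda>ts. of_bool (\<forall>j<m. g (ts j) = 1))
           \<le> ereal (\<mu> ^ m / (1 - \<mu> ^ m))"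
proof -
  have "0 \<le> \<mu>"
    using mean g by (auto intro: Bochner_Integration.integral_nonneg)
  have "measure_pmf.prob p {x. g x = 1} = measure_pmf.expectation p (indicator {x. g x = 1})"
    by (simp add: measure_pmf.emeasure_eq_measure)
  also have "\<dots> \<le> \<mu>"
    unfolding mean[symmetric] using g
    by (intro integral_mono integrable_measure_pmf_bounded[where B=1]) (auto simp: indicator_def abs_le_iff)
  finally have "measure_pmf.prob p {x. g x = 1} \<le> \<mu>" .
  then have "measure_pmf.prob (Pi_pmf {..<m} d (\<lambda>_. p)) {ts. \<forall>j<m. g (ts j) = 1} \<le> \<mu> ^ m"
    using measure_Pi_pmf_Pi[of "{..<m}" d "\<lambda>_. p" "\<lambda>_. {x. g x = 1}"]
    by (simp add: Pi_def power_mono)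
  then show ?thesis
    by (rule SNR_of_bool_le)
       (use \<open>0 \<le> \<mu>\<close> \<open>\<mu> < 1\<close> m in \<open>simp add: power_less_one_iff\<close>)
qed

lemma agree_frac_nonneg: "0 \<le> agree_frac H e c1 c2 t"
  by (simp add: agree_frac_def sum_nonneg)

lemma agree_frac_le_1: "agree_frac H e c1 c2 t \<le> 1"
proof -
  have "(\<Sum>k<length t. if H e c1 t ! k = H e c2 t ! k then 1 else 0 :: real) \<le> (\<Sum>k<length t. 1)"
    by (intro sum_mono) simp
  then show ?thesis
    by (cases "length t = 0") (simp_all add: agree_frac_def field_simps)
qed

lemma sim_hat_inf_eq_of_bool:
  assumes "m \<noteq> 0"
  shows "sim_hat_inf m H e c1 c2 = (\<lambda>ts. of_bool (\<forall>j<m. agree_frac H e c1 c2 (ts j) = 1))"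
proof
  fix ts
  have "(\<Sum>j<m. agree_frac H e c1 c2 (ts j)) \<le> (\<Sum>j<m. 1)"
    by (intro sum_mono agree_frac_le_1)
  then have "0 \<le> sim_hat m H e c1 c2 ts" "sim_hat m H e c1 c2 ts \<le> 1"
    using assms by (simp_all add: sim_hat_def sum_nonneg agree_frac_nonneg)
  then have "sim_hat_inf m H e c1 c2 ts = of_bool (sim_hat m H e c1 c2 ts = 1)"
    by (simp add: sim_hat_inf_def lim_power_unit_interval)
  also have "sim_hat m H e c1 c2 ts = 1 \<longleftrightarrow> (\<forall>j<m. agree_frac H e c1 c2 (ts j) = 1)"
    unfolding sim_hat_def by (rule mean_eq_1_iff[OF assms agree_frac_le_1])
  finally show "sim_hat_inf m H e c1 c2 ts = of_bool (\<forall>j<m. agree_frac H e c1 c2 (ts j) = 1)" .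
qed

theorem theorem4p11:
  fixes p :: "('v::finite) list pmf"
    and H :: "'e \<Rightarrow> 'v list \<Rightarrow> 'v list \<Rightarrow> 'o list"
    and e :: 'e and c1 c2 :: "'v list" and m :: nat and \<mu> :: real
  assumes suite_nonempty: "\<And>t. t \<in> set_pmf p \<Longrightarrow> length t \<ge> 1"
    and out_len: "\<And>c t. length (H e c t) = length t"
    and mu_def: "sim p H e c1 c2 = \<mu>"
    and mu_pos: "0 < \<mu>" and mu_lt1: "\<mu> < 1"
    and m_pos: "m \<ge> 1"
  shows "SNR (iid_suites p m) (sim_hat m H e c1 c2) / SNR (iid_suites p m) (sim_hat_inf m H e c1 c2)
           \<ge> ereal (real m * (1 / \<mu>) ^ (m - 1) * ((1 - \<mu> ^ m) / (1 - \<mu>)))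
       \<and> real m * (1 / \<mu>) ^ (m - 1) * ((1 - \<mu> ^ m) / (1 - \<mu>)) \<ge> (real m)\<^sup>2"
proof -
  let ?a = "agree_frac H e c1 c2"
  have m: "m \<noteq> 0"
    using m_pos by simp
  have mean: "measure_pmf.expectation p ?a = \<mu>"
    using mu_def by (simp add: sim_def)
  have smooth: "ereal (real m * \<mu> / (1 - \<mu>)) \<le> SNR (iid_suites p m) (sim_hat m H e c1 c2)"
    using SNR_mean_iid_ge[where g="?a", OF agree_frac_nonneg agree_frac_le_1 mean mu_pos mu_lt1 m]
    by (simp add: iid_suites_def sim_hat_def[abs_def])
  have sharp: "SNR (iid_suites p m) (sim_hat_inf m H e c1 c2) \<le> ereal (\<mu> ^ m / (1 - \<mu> ^ m))"
    using SNR_all_eq_1_iid_le[where g="?a", OF agree_frac_nonneg agree_frac_le_1 mean mu_lt1 m]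
    by (simp add: iid_suites_def sim_hat_inf_eq_of_bool[OF m])
  have "\<mu> ^ m < 1"
    using mu_pos mu_lt1 m by (simp add: power_less_one_iff)
  then have "ereal ((real m * \<mu> / (1 - \<mu>)) / (\<mu> ^ m / (1 - \<mu> ^ m)))
      \<le> SNR (iid_suites p m) (sim_hat m H e c1 c2) / SNR (iid_suites p m) (sim_hat_inf m H e c1 c2)"
    using mu_pos mu_lt1 by (intro ereal_divide_mono[OF smooth SNR_nonneg sharp]) auto
  moreover note divide_eq_geometric_ratio[OF mu_pos mu_lt1 m]
  ultimately show ?thesis
    using square_le_geometric_ratio[OF mu_pos mu_lt1] by simp
qed

end
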